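(* Let $\rho$ be a density operator and $O$ a Hermitian observable on a finite-dimensional Hilbert space, let $H_1,\dots,H_K$ be Hermitian operators (not necessarily commuting) and $V_1,\dots,V_K$ unitaries. For $\theta\in\mathbb{R}$ define the channel $\mathcal{E}_\theta(X)=\Big(\prod_{k=1}^KV_ke^{-i\theta H_k}\Big)^\dagger X\Big(\prod_{k=1}^KV_ke^{-i\theta H_k}\Big)$ and $\mathcal{L}(\theta)=\operatorname{Tr}[\rho\,\mathcal{E}_\theta(O)]$. Let $\phi\in\mathbb{R}$ and $r>0$ with $r\le\frac{3}{4\sum_{i=1}^K\omega^{(\max)}(H_i)}$. Then $$\operatorname{Var}_{\theta\sim\mathcal{U}(\phi,r)}[\mathcal{L}(\theta)]\ge\frac{r^4}{45}\operatorname{Tr}[\rho\,\mathcal{E}^{(2)}_\phi(O)]^2-\frac{32\big(\sum_{i=1}^K\omega^{(\max)}(H_i)\big)^6\|O\|_\infty^2}{135}r^6,$$ where $\mathcal{E}^{(2)}_\phi(O)=\frac{d^2}{d\theta^2}\mathcal{E}_\theta(O)\big|_{\theta=\phi}$.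
   Context: $\omega^{(\max)}(H)=\lambda_{\max}(H)-\lambda_{\min}(H)$. $\|\cdot\|_\infty$ is the operator norm. The product $\prod_{k=1}^K$ is ordered with $k=1$ leftmost. $\mathcal{U}(\phi,r)$ is the uniform distribution on $[\phi-r,\phi+r]$. *)

theory Defs
  imports "HOL-Analysis.Analysis"
begin

type_synonym 'n cmat = "complex^'n^'n"

definition mat_adj :: "'n::finite cmat \<Rightarrow> 'n cmat" where
  "mat_adj A = (\<chi> i j. cnj (A $ j $ i))"

definition cscale_mat :: "complex \<Rightarrow> 'n::finite cmat \<Rightarrow> 'n cmat" where
  "cscale_mat c A = (\<chi> i j. c * A $ i $ j)"

definition hermitian :: "'n::finite cmat \<Rightarrow> bool" where
  "hermitian A \<longleftrightarrow> mat_adj A = A"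

definition unitary :: "'n::finite cmat \<Rightarrow> bool" where
  "unitary U \<longleftrightarrow> mat_adj U ** U = mat 1 \<and> U ** mat_adj U = mat 1"

definition cinner :: "complex^'n::finite \<Rightarrow> complex^'n \<Rightarrow> complex" where
  "cinner v w = (\<Sum>i\<in>UNIV. cnj (v $ i) * w $ i)"

definition density_operator :: "'n::finite cmat \<Rightarrow> bool" where
  "density_operator \<rho> \<longleftrightarrow> hermitian \<rho> \<and>
     (\<forall>v. Im (cinner v (\<rho> *v v)) = 0 \<and> 0 \<le> Re (cinner v (\<rho> *v v))) \<and>
     trace \<rho> = 1"

fun matpow :: "'n::finite cmat \<Rightarrow> nat \<Rightarrow> 'n cmat" where
  "matpow A 0 = mat 1"
| "matpow A (Suc k) = A ** matpow A k"

definition mexp :: "'n::finite cmat \<Rightarrow> 'n cmat" where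
  "mexp A = (\<Sum>k. (1 / fact k) *\<^sub>R matpow A k)"

definition eigvals :: "'n::finite cmat \<Rightarrow> complex set" where
  "eigvals A = {c. \<exists>v. v \<noteq> 0 \<and> A *v v = c *s v}"

text \<open>omega_max(H) = lambda_max(H) - lambda_min(H) (eigenvalues of a Hermitian H are real)\<close>
definition omega_max :: "'n::finite cmat \<Rightarrow> real" where
  "omega_max H = Max (Re ` eigvals H) - Min (Re ` eigvals H)"

definition op_norm :: "'n::finite cmat \<Rightarrow> real" where
  "op_norm A = onorm (\<lambda>v. A *v v)"

text \<open>ordered product prod_{k=1}^K V_k exp(-i theta H_k), with k = 1 leftmost\<close>
definition circ_unitary :: "nat \<Rightarrow> (nat \<Rightarrow> 'n::finite cmat) \<Rightarrow> (nat \<Rightarrow> 'n cmat) \<Rightarrow> real \<Rightarrow> 'n cmat" where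
  "circ_unitary K V H \<theta> =
     foldr (\<lambda>k A. (V k ** mexp (cscale_mat (- \<i> * complex_of_real \<theta>) (H k))) ** A) [1..<K+1] (mat 1)"

definition chan :: "nat \<Rightarrow> (nat \<Rightarrow> 'n::finite cmat) \<Rightarrow> (nat \<Rightarrow> 'n cmat) \<Rightarrow> real \<Rightarrow> 'n cmat \<Rightarrow> 'n cmat" where
  "chan K V H \<theta> X = mat_adj (circ_unitary K V H \<theta>) ** X ** circ_unitary K V H \<theta>"

text \<open>L(theta) = Tr[rho E_theta(O)] (real for Hermitian rho, O; we take the real part)\<close>
definition loss :: "'n::finite cmat \<Rightarrow> 'n cmat \<Rightarrow> nat \<Rightarrow> (nat \<Rightarrow> 'n cmat) \<Rightarrow> (nat \<Rightarrow> 'n cmat) \<Rightarrow> real \<Rightarrow> real" where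
  "loss \<rho> Ob K V H \<theta> = Re (trace (\<rho> ** chan K V H \<theta> Ob))"

definition chan2 :: "nat \<Rightarrow> (nat \<Rightarrow> 'n::finite cmat) \<Rightarrow> (nat \<Rightarrow> 'n cmat) \<Rightarrow> real \<Rightarrow> 'n cmat \<Rightarrow> 'n cmat" where
  "chan2 K V H \<phi> X =
     vector_derivative (\<lambda>t. vector_derivative (\<lambda>s. chan K V H s X) (at t)) (at \<phi>)"

definition unif_var :: "real \<Rightarrow> real \<Rightarrow> (real \<Rightarrow> real) \<Rightarrow> real" where
  "unif_var \<phi> r f =
     (let M = uniform_measure lborel {\<phi> - r .. \<phi> + r}
      in integral\<^sup>L M (\<lambda>\<theta>. (f \<theta> - integral\<^sup>L M f)\<^sup>2))"

end

theory Submission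
  imports Defs
begin

text \<open>Differentiating
  \<open>exp(i\<theta>H) Y(\<theta>) exp(-i\<theta>H)\<close> produces the commutator \<open>i[H, Y]\<close>, whose operator norm is at
  most \<open>\<omega>(H) \<parallel>Y\<parallel>\<close> (subtract the midpoint of the spectrum of \<open>H\<close>). By induction over the layers,
  the \<open>m\<close>-th derivative of \<open>\<theta> \<mapsto> \<E>\<^sub>\<theta>(O)\<close> has norm at most \<open>\<Omega>\<^sup>m \<parallel>O\<parallel>\<close> with
  \<open>\<Omega> = \<Sum>\<^sub>k \<omega>(H\<^sub>k)\<close>, so \<open>|\<L>\<^sup>(\<^sup>m\<^sup>)| \<le> \<Omega>\<^sup>m \<parallel>O\<parallel>\<close> because \<open>|Tr(\<rho> Y)| \<le> \<parallel>Y\<parallel>\<close>.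
  The variance is then bounded below through the fourth-order Taylor expansion of \<open>\<L>\<close> at \<open>\<phi>\<close>,
  symmetrised in \<open>\<theta> - \<phi>\<close>, trading the remainder against the main term with weight
  \<open>\<epsilon> = \<Omega>\<^sup>2 r\<^sup>2\<close>.\<close>

section \<open>Matrix algebra\<close>

lemma complex_scaleR [simp]: "c *\<^sub>R (z::complex) = of_real c * z"
  by (simp add: scaleR_conv_of_real)

lemma mat_adj_nth [simp]: "mat_adj A $ i $ j = cnj (A $ j $ i)"
  by (simp add: mat_adj_def)

lemma cscale_mat_nth [simp]: "cscale_mat c A $ i $ j = c * A $ i $ j"
  by (simp add: cscale_mat_def)

lemma mat_adj_adj [simp]: "mat_adj (mat_adj A) = A"
  by (simp add: vec_eq_iff)

lemma mat_adj_mult: "mat_adj (A ** B) = mat_adj B ** mat_adj (A :: 'n::finite cmat)"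
  by (simp add: vec_eq_iff matrix_matrix_mult_def mult.commute)

lemma mat_adj_add: "mat_adj (A + B) = mat_adj A + mat_adj (B :: 'n::finite cmat)"
  by (simp add: vec_eq_iff)

lemma mat_adj_scaleR: "mat_adj (c *\<^sub>R A) = c *\<^sub>R mat_adj (A :: 'n::finite cmat)"
  by (simp add: vec_eq_iff)

lemma mat_adj_cscale: "mat_adj (cscale_mat c A) = cscale_mat (cnj c) (mat_adj (A :: 'n::finite cmat))"
  by (simp add: vec_eq_iff)

lemma mat_adj_one [simp]: "mat_adj (mat 1 :: 'n::finite cmat) = mat 1"
  by (simp add: vec_eq_iff mat_def)

lemma cscale_mult_left: "cscale_mat c A ** B = cscale_mat c (A ** (B :: 'n::finite cmat))"
  by (simp add: vec_eq_iff matrix_matrix_mult_def sum_distrib_left mult.assoc)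

lemma cscale_mult_right: "A ** cscale_mat c B = cscale_mat c (A ** (B :: 'n::finite cmat))"
  by (simp add: vec_eq_iff matrix_matrix_mult_def sum_distrib_left mult.left_commute)

lemma matrix_add_rdistrib: "(A + B) ** C = A ** C + B ** (C :: 'n::finite cmat)"
  by (simp add: vec_eq_iff matrix_matrix_mult_def sum.distrib algebra_simps)

lemma matrix_diff_ldistrib: "C ** (A - B) = C ** A - C ** (B :: 'n::finite cmat)"
  by (simp add: vec_eq_iff matrix_matrix_mult_def sum_subtractf algebra_simps)

lemma matrix_diff_rdistrib: "(A - B) ** C = A ** C - B ** (C :: 'n::finite cmat)"
  by (simp add: vec_eq_iff matrix_matrix_mult_def sum_subtractf algebra_simps)

lemma matrix_scaleR_left: "(c *\<^sub>R A) ** B = c *\<^sub>R (A ** (B :: 'n::finite cmat))"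
  by (simp add: scalar_matrix_assoc)

lemma matrix_scaleR_right: "A ** (c *\<^sub>R B) = c *\<^sub>R (A ** (B :: 'n::finite cmat))"
  by (simp add: matrix_scalar_ac scalar_matrix_assoc)

lemmas matrix_mult_distribs =
  matrix_add_ldistrib matrix_add_rdistrib matrix_diff_ldistrib matrix_diff_rdistrib
  matrix_scaleR_left matrix_scaleR_right

lemma matrix_vector_mult_scaleR: "(A::'n::finite cmat) *v (c *\<^sub>R x) = c *\<^sub>R (A *v x)"
  by (simp add: vec_eq_iff matrix_vector_mult_def sum_distrib_left algebra_simps)

lemma matrix_vector_mult_cscale_vec: "(A::'n::finite cmat) *v (c *s x) = c *s (A *v x)"
  by (simp add: vec_eq_iff matrix_vector_mult_def sum_distrib_left algebra_simps)

lemma cscale_matrix_vector_mult: "cscale_mat c (A::'n::finite cmat) *v x = c *s (A *v x)"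
  by (simp add: vec_eq_iff matrix_vector_mult_def sum_distrib_left algebra_simps)

lemma bounded_linear_conj_mult: "bounded_linear (\<lambda>X::'n::finite cmat. A ** X ** (B::'n cmat))"
  by (rule linear_conv_bounded_linear[THEN iffD1], rule linearI)
     (simp_all add: matrix_mult_distribs)

lemma bounded_bilinear_matrix_mult: "bounded_bilinear (\<lambda>(A::'n::finite cmat) (B::'n cmat). A ** B)"
  by (rule bilinear_conv_bounded_bilinear[THEN iffD1])
     (auto simp: bilinear_def matrix_mult_distribs intro!: linearI)

lemma bounded_linear_mat_adj: "bounded_linear (mat_adj :: 'n::finite cmat \<Rightarrow> 'n cmat)"
  by (rule linear_conv_bounded_linear[THEN iffD1], rule linearI)
     (simp_all add: mat_adj_add mat_adj_scaleR)

lemma unitary_adj: "unitary U \<Longrightarrow> unitary (mat_adj U)"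
  by (simp add: unitary_def)

lemma unitary_mult: "unitary U \<Longrightarrow> unitary V \<Longrightarrow> unitary (U ** (V::'n::finite cmat))"
  unfolding unitary_def mat_adj_mult
  by (metis matrix_mul_assoc matrix_mul_lid)

lemma cinner_zero_right [simp]: "cinner v 0 = 0"
  by (simp add: cinner_def)

lemma cinner_add_right: "cinner v (w + u) = cinner v w + cinner v u"
  by (simp add: cinner_def sum.distrib algebra_simps)

lemma cinner_add_left: "cinner (v + w) u = cinner v u + cinner w u"
  by (simp add: cinner_def sum.distrib algebra_simps)

lemma cinner_diff_right: "cinner v (w - u) = cinner v w - cinner v u"
  by (simp add: cinner_def sum_subtractf algebra_simps)

lemma cinner_cscale_right: "cinner v (c *s w) = c * cinner v w"
  by (simp add: cinner_def sum_distrib_left algebra_simps)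

lemma cinner_cscale_left: "cinner (c *s v) w = cnj c * cinner v w"
  by (simp add: cinner_def sum_distrib_left algebra_simps)

lemma cinner_scaleR_right: "cinner v (c *\<^sub>R w) = of_real c * cinner v w"
  by (simp add: cinner_def sum_distrib_left algebra_simps)

lemma cinner_scaleR_left: "cinner (c *\<^sub>R v) w = of_real c * cinner v w"
  by (simp add: cinner_def sum_distrib_left algebra_simps)

lemma cinner_commute: "cinner w v = cnj (cinner v w)"
  by (simp add: cinner_def mult.commute)

lemma cinner_adj: "cinner v (A *v w) = cinner (mat_adj A *v v) w"
proof -
  have "cinner v (A *v w) = (\<Sum>i\<in>UNIV. \<Sum>j\<in>UNIV. cnj (v $ i) * (A $ i $ j * w $ j))"
    by (simp add: cinner_def matrix_vector_mult_def sum_distrib_left)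
  also have "\<dots> = (\<Sum>j\<in>UNIV. \<Sum>i\<in>UNIV. cnj (v $ i) * (A $ i $ j * w $ j))"
    by (rule sum.swap)
  also have "\<dots> = cinner (mat_adj A *v v) w"
    by (simp add: cinner_def matrix_vector_mult_def sum_distrib_right sum_distrib_left algebra_simps)
  finally show ?thesis .
qed

lemma bounded_linear_cinner_right: "bounded_linear (cinner v)"
  by (rule linear_conv_bounded_linear[THEN iffD1], rule linearI)
     (simp_all add: cinner_add_right cinner_scaleR_right)

lemma bounded_bilinear_cinner: "bounded_bilinear cinner"
  by (rule bilinear_conv_bounded_bilinear[THEN iffD1])
     (auto simp: bilinear_def cinner_add_right cinner_add_left cinner_scaleR_right
        cinner_scaleR_left intro!: linearI)

lemma hermitian_cinner: "hermitian A \<Longrightarrow> cinner v (A *v w) = cinner (A *v v) w"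
  by (simp add: hermitian_def cinner_adj)

lemma norm_vec_power2: "(norm v)\<^sup>2 = (\<Sum>i\<in>UNIV. (norm (v $ i))\<^sup>2)"
  unfolding norm_vec_def L2_set_def by (simp add: sum_nonneg)

lemma cinner_self: "cinner v v = of_real ((norm v)\<^sup>2)"
proof -
  have "cinner v v = (\<Sum>i\<in>UNIV. of_real ((norm (v $ i))\<^sup>2))"
    unfolding cinner_def
    by (intro sum.cong refl) (simp add: complex_norm_square mult.commute del: of_real_power)
  thus ?thesis by (simp add: norm_vec_power2)
qed

lemma Re_cinner_self: "Re (cinner v v) = (norm v)\<^sup>2"
  by (simp add: cinner_self)

lemma Re_cinner: "Re (cinner v w) = inner v w"
  by (simp add: cinner_def inner_vec_def Re_sum inner_complex_def algebra_simps)

lemma norm_cscale_vec: "norm (c *s v) = norm c * norm (v :: complex^'n::finite)"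
proof -
  have "(norm (c *s v))\<^sup>2 = (norm c * norm v)\<^sup>2"
    by (simp add: norm_vec_power2 power_mult_distrib norm_mult sum_distrib_left)
  thus ?thesis by (simp add: power2_eq_iff_nonneg)
qed

text \<open>Cauchy--Schwarz is reduced to its real version by rotating \<open>w\<close> by a phase.\<close>

lemma norm_cinner_le: "norm (cinner v w) \<le> norm v * norm w"
proof -
  define z where "z = cinner v w"
  define u where "u = cnj (sgn z)"
  have "norm z = Re (u * z)"
    unfolding u_def
    by (cases "z = 0") (simp_all add: complex_sgn_def divide_simps, metis cmod_power2 power2_eq_square)
  also have "\<dots> = inner v (u *s w)"
    by (simp add: z_def cinner_cscale_right flip: Re_cinner)
  also have "\<dots> \<le> norm v * norm (u *s w)" by (rule norm_cauchy_schwarz)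
  also have "\<dots> \<le> norm v * norm w"
    by (simp add: norm_cscale_vec u_def norm_sgn mult_left_le)
  finally show ?thesis by (simp add: z_def)
qed

lemma unitary_norm_preserving: "unitary U \<Longrightarrow> norm ((U::'n::finite cmat) *v v) = norm v"
proof -
  assume u: "unitary U"
  have "of_real ((norm (U *v v))\<^sup>2) = cinner (U *v v) (U *v v)"
    by (simp only: cinner_self)
  also have "\<dots> = cinner (mat_adj U *v (U *v v)) v" by (rule cinner_adj)
  also have "\<dots> = of_real ((norm v)\<^sup>2)"
    using u by (simp add: matrix_vector_mul_assoc unitary_def cinner_self)
  finally show ?thesis by (simp only: of_real_eq_iff power2_eq_iff_nonneg norm_ge_zero)
qed

lemma op_norm_mult_vec: "norm ((A::'n::finite cmat) *v v) \<le> op_norm A * norm v"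
  unfolding op_norm_def by (rule onorm) simp

lemma op_norm_le: "(\<And>v. norm ((A::'n::finite cmat) *v v) \<le> b * norm v) \<Longrightarrow> op_norm A \<le> b"
  unfolding op_norm_def by (rule onorm_le)

lemma op_norm_nonneg: "0 \<le> op_norm (A::'n::finite cmat)"
  unfolding op_norm_def by (rule onorm_pos_le) simp

lemma op_norm_zero [simp]: "op_norm (0::'n::finite cmat) = 0"
proof -
  have "op_norm (0::'n cmat) \<le> 0" by (rule op_norm_le) simp
  thus ?thesis using op_norm_nonneg[of "0::'n cmat"] by linarith
qed

lemma op_norm_mult: "op_norm ((A::'n::finite cmat) ** B) \<le> op_norm A * op_norm B"
proof (rule op_norm_le)
  fix v
  have "norm ((A ** B) *v v) \<le> op_norm A * norm (B *v v)"
    by (simp add: op_norm_mult_vec flip: matrix_vector_mul_assoc)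
  also have "\<dots> \<le> op_norm A * (op_norm B * norm v)"
    by (rule mult_left_mono[OF op_norm_mult_vec op_norm_nonneg])
  finally show "norm ((A ** B) *v v) \<le> op_norm A * op_norm B * norm v" by (simp add: mult.assoc)
qed

lemma op_norm_add: "op_norm ((A::'n::finite cmat) + B) \<le> op_norm A + op_norm B"
proof (rule op_norm_le)
  fix v
  have "norm ((A + B) *v v) \<le> norm (A *v v) + norm (B *v v)"
    by (simp add: matrix_vector_mult_add_rdistrib norm_triangle_ineq)
  also have "\<dots> \<le> (op_norm A + op_norm B) * norm v"
    using add_mono[OF op_norm_mult_vec op_norm_mult_vec] by (simp add: algebra_simps)
  finally show "norm ((A + B) *v v) \<le> (op_norm A + op_norm B) * norm v" .
qed

lemma op_norm_diff: "op_norm ((A::'n::finite cmat) - B) \<le> op_norm A + op_norm B"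
proof (rule op_norm_le)
  fix v
  have "norm ((A - B) *v v) \<le> norm (A *v v) + norm (B *v v)"
    by (simp add: matrix_vector_mult_diff_rdistrib norm_triangle_ineq4)
  also have "\<dots> \<le> (op_norm A + op_norm B) * norm v"
    using add_mono[OF op_norm_mult_vec op_norm_mult_vec] by (simp add: algebra_simps)
  finally show "norm ((A - B) *v v) \<le> (op_norm A + op_norm B) * norm v" .
qed

lemma op_norm_cscale: "op_norm (cscale_mat c (A::'n::finite cmat)) \<le> norm c * op_norm A"
proof (rule op_norm_le)
  fix v
  have "norm (cscale_mat c A *v v) \<le> norm c * (op_norm A * norm v)"
    by (simp add: cscale_matrix_vector_mult norm_cscale_vec mult_left_mono op_norm_mult_vec)
  thus "norm (cscale_mat c A *v v) \<le> norm c * op_norm A * norm v" by (simp add: mult.assoc)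
qed

lemma op_norm_unitary_conj: "unitary U \<Longrightarrow> op_norm (mat_adj U ** X ** (U::'n::finite cmat)) \<le> op_norm X"
proof (rule op_norm_le)
  fix v assume u: "unitary U"
  have "norm ((mat_adj U ** X ** U) *v v) = norm (mat_adj U *v (X *v (U *v v)))"
    by (simp add: matrix_vector_mul_assoc matrix_mul_assoc)
  also have "\<dots> = norm (X *v (U *v v))"
    using unitary_norm_preserving[OF unitary_adj[OF u]] by simp
  also have "\<dots> \<le> op_norm X * norm v"
    using op_norm_mult_vec[of X "U *v v"] unitary_norm_preserving[OF u] by simp
  finally show "norm ((mat_adj U ** X ** U) *v v) \<le> op_norm X * norm v" .
qed


section \<open>Spectral theorem for Hermitian matrices\<close>

definition diagm :: "('n::finite \<Rightarrow> complex) \<Rightarrow> 'n cmat" where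
  "diagm d = (\<chi> i j. if i = j then d i else 0)"

lemma diagm_nth [simp]: "diagm d $ i $ j = (if i = j then d i else 0)"
  by (simp add: diagm_def)

lemma diagm_mult_left: "(diagm d ** X) $ i $ j = d i * X $ i $ j"
  by (simp add: matrix_matrix_mult_def if_distrib if_distribR sum.delta cong: if_cong)

lemma diagm_mult_right: "(X ** diagm d) $ i $ j = X $ i $ j * d j"
  by (simp add: matrix_matrix_mult_def if_distrib if_distribR sum.delta' cong: if_cong)

lemma diagm_mult: "diagm d ** diagm e = diagm (\<lambda>i. d i * e i)"
  by (simp add: vec_eq_iff diagm_mult_left)

lemma diagm_adj: "mat_adj (diagm d) = diagm (\<lambda>i. cnj (d i))"
  by (simp add: vec_eq_iff)

lemma diagm_one: "diagm (\<lambda>i. 1) = mat 1"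
  by (simp add: vec_eq_iff mat_def)

lemma diagm_matrix_vector_mult: "diagm d *v v = (\<chi> i. d i * v $ i)"
  by (simp add: vec_eq_iff matrix_vector_mult_def if_distrib if_distribR sum.delta cong: if_cong)

lemma op_norm_diagm_le: "(\<And>i. norm (d i) \<le> b) \<Longrightarrow> op_norm (diagm d) \<le> b"
proof (rule op_norm_le)
  fix v assume b: "\<And>i. norm (d i) \<le> b"
  have "0 \<le> b" using b[of undefined] norm_ge_zero order_trans by blast
  have "(norm (diagm d *v v))\<^sup>2 = (\<Sum>i\<in>UNIV. (norm (d i * v $ i))\<^sup>2)"
    by (simp add: norm_vec_power2 diagm_matrix_vector_mult)
  also have "\<dots> \<le> (\<Sum>i\<in>UNIV. b\<^sup>2 * (norm (v $ i))\<^sup>2)"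
    by (intro sum_mono) (simp add: norm_mult power_mult_distrib b mult_right_mono power_mono)
  also have "\<dots> = (b * norm v)\<^sup>2"
    by (simp add: norm_vec_power2 sum_distrib_left power_mult_distrib)
  finally show "norm (diagm d *v v) \<le> b * norm v"
    using \<open>0 \<le> b\<close> by (simp add: power2_le_iff_abs_le)
qed

lemma quadratic_le_0_imp_linear_zero:
  fixes a b :: real
  assumes "\<And>t. 2 * t * a + t\<^sup>2 * b \<le> 0"
  shows "a = 0"
proof -
  define t where "t = a / (1 + \<bar>b\<bar>)"
  have e: "t * (1 + \<bar>b\<bar>) = a" by (simp add: t_def)
  have "(2 * t * a + t\<^sup>2 * b) * (1 + \<bar>b\<bar>)\<^sup>2
      = 2 * a * (t * (1 + \<bar>b\<bar>)) * (1 + \<bar>b\<bar>) + (t * (1 + \<bar>b\<bar>))\<^sup>2 * b"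
    by (simp add: power2_eq_square algebra_simps)
  also have "\<dots> = a\<^sup>2 * (2 * (1 + \<bar>b\<bar>) + b)"
    by (simp only: e) (simp add: power2_eq_square algebra_simps)
  finally have eq: "(2 * t * a + t\<^sup>2 * b) * (1 + \<bar>b\<bar>)\<^sup>2 = a\<^sup>2 * (2 * (1 + \<bar>b\<bar>) + b)" .
  have "(2 * t * a + t\<^sup>2 * b) * (1 + \<bar>b\<bar>)\<^sup>2 \<le> 0"
    using assms[of t] by (simp add: mult_nonpos_nonneg)
  hence "a\<^sup>2 * (2 * (1 + \<bar>b\<bar>) + b) \<le> 0" by (simp only: eq)
  moreover have "0 < 2 * (1 + \<bar>b\<bar>) + b" by (cases "b \<ge> 0") auto
  ultimately have "a\<^sup>2 \<le> 0" by (simp add: mult_le_0_iff)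
  thus ?thesis by simp
qed

text \<open>A maximiser \<open>v\<^sub>0\<close> of the Rayleigh quotient on an invariant subspace is an eigenvector: for
  \<open>w = A v\<^sub>0 - M v\<^sub>0\<close>, maximality at \<open>v\<^sub>0 + t w\<close> gives \<open>2 t \<parallel>w\<parallel>\<^sup>2 + O(t\<^sup>2) \<le> 0\<close> for all real \<open>t\<close>.\<close>

lemma hermitian_rayleigh_maximizer_eigenvector:
  fixes A :: "'n::finite cmat"
  assumes herm: "hermitian A" and W: "subspace W" and inv: "\<And>v. v \<in> W \<Longrightarrow> A *v v \<in> W"
    and v0: "v0 \<in> W" "norm v0 = 1"
    and max: "\<And>u. u \<in> W \<Longrightarrow> Re (cinner u (A *v u)) \<le> Re (cinner v0 (A *v v0)) * (norm u)\<^sup>2"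
  shows "A *v v0 = of_real (Re (cinner v0 (A *v v0))) *s v0"
proof -
  define f where "f u = Re (cinner u (A *v u))" for u
  define M where "M = f v0"
  define w where "w = A *v v0 - of_real M *s v0"
  have "w \<in> W"
    unfolding w_def using subspace_diff[OF W inv[OF v0(1)] subspace_mul[OF W v0(1), of M]]
    by (simp add: scaleR_vec_def vector_scalar_mult_def)
  have "2 * t * Re (cinner w w) + t\<^sup>2 * (f w - M * (norm w)\<^sup>2) \<le> 0" for t
  proof -
    have "v0 + t *\<^sub>R w \<in> W" using W v0(1) \<open>w \<in> W\<close> by (simp add: subspace_add subspace_mul)
    hence le: "f (v0 + t *\<^sub>R w) \<le> M * (norm (v0 + t *\<^sub>R w))\<^sup>2"
      using max by (simp add: f_def M_def)
    have sym: "Re (cinner v0 (A *v w)) = Re (cinner w (A *v v0))"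
      by (simp add: hermitian_cinner[OF herm] cinner_commute[of "A *v v0" w])
    have f_expand: "f (v0 + t *\<^sub>R w) = M + 2 * t * Re (cinner w (A *v v0)) + t\<^sup>2 * f w"
      using sym
      by (simp add: f_def M_def matrix_vector_right_distrib matrix_vector_mult_scaleR
          cinner_add_left cinner_add_right cinner_scaleR_left cinner_scaleR_right
          power2_eq_square algebra_simps)
    have "(norm (v0 + t *\<^sub>R w))\<^sup>2 = Re (cinner (v0 + t *\<^sub>R w) (v0 + t *\<^sub>R w))"
      by (simp only: Re_cinner_self)
    also have "\<dots> = 1 + 2 * t * Re (cinner w v0) + t\<^sup>2 * (norm w)\<^sup>2"
      using v0(2) cinner_commute[of v0 w]
      by (simp add: cinner_add_left cinner_add_right cinner_scaleR_left cinner_scaleR_right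
          Re_cinner_self power2_eq_square algebra_simps)
    finally have norm_expand: "(norm (v0 + t *\<^sub>R w))\<^sup>2 = 1 + 2 * t * Re (cinner w v0) + t\<^sup>2 * (norm w)\<^sup>2" .
    have "Re (cinner w (A *v v0)) = Re (cinner w w) + M * Re (cinner w v0)"
      by (simp add: w_def cinner_diff_right cinner_cscale_right)
    with le show ?thesis unfolding f_expand norm_expand by (simp add: algebra_simps)
  qed
  hence "Re (cinner w w) = 0" by (rule quadratic_le_0_imp_linear_zero)
  hence "w = 0" by (simp add: cinner_self)
  thus ?thesis by (simp add: w_def M_def f_def)
qed

lemma cinner_orthogonal_exists:
  fixes S :: "(complex^'n::finite) set"
  assumes fin: "finite S" and card: "card S < CARD('n)"
  obtains x where "x \<noteq> 0" "\<And>s. s \<in> S \<Longrightarrow> cinner s x = 0"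
proof -
  define T where "T = S \<union> (\<lambda>s. \<i> *s s) ` S"
  have "dim T \<le> card T" by (rule dim_le_card') (simp add: T_def fin)
  also have "card T \<le> card S + card S" unfolding T_def
    by (rule order_trans[OF card_Un_le]) (simp add: card_image_le fin)
  also have "\<dots> < DIM(complex^'n)" using card by simp
  finally obtain x :: "complex^'n" where "x \<noteq> 0" and xo: "\<And>y. y \<in> span T \<Longrightarrow> orthogonal x y"
    using orthogonal_to_subspace_exists by blast
  moreover have "cinner s x = 0" if "s \<in> S" for s
  proof -
    have "orthogonal x s" "orthogonal x (\<i> *s s)"
      using that by (auto intro!: xo span_base simp: T_def)
    hence "Re (cinner s x) = 0" "Re (cinner (\<i> *s s) x) = 0"
      by (simp_all add: orthogonal_def Re_cinner inner_commute)
    thus ?thesis by (simp add: cinner_cscale_left complex_eq_iff)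
  qed
  ultimately show ?thesis using that by blast
qed

lemma rayleigh_maximizer_exists:
  fixes A :: "'n::finite cmat"
  assumes W: "subspace W" "closed W" and x: "x \<in> W" "x \<noteq> 0"
  obtains v0 where "v0 \<in> W" "norm v0 = 1"
    "\<And>u. u \<in> W \<Longrightarrow> Re (cinner u (A *v u)) \<le> Re (cinner v0 (A *v v0)) * (norm u)\<^sup>2"
proof -
  define f where "f v = Re (cinner v (A *v v))" for v
  define K where "K = W \<inter> sphere 0 1"
  have normalize: "(1 / norm u) *\<^sub>R u \<in> K" if "u \<in> W" "u \<noteq> 0" for u
    using that subspace_mul[OF W(1) that(1), of "1 / norm u"] by (simp add: K_def)
  have "K \<noteq> {}" using normalize[OF x] by blast
  moreover have "compact K" unfolding K_def by (intro closed_Int_compact compact_sphere W(2))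
  moreover have "continuous_on K f"
    unfolding f_def
    by (intro continuous_intros bounded_bilinear.continuous_on[OF bounded_bilinear_cinner]
        linear_continuous_on) simp_all
  ultimately obtain v0 where "v0 \<in> K" and v0_max: "\<And>y. y \<in> K \<Longrightarrow> f y \<le> f v0"
    using continuous_attains_sup[of K f] by blast
  moreover have "f u \<le> f v0 * (norm u)\<^sup>2" if "u \<in> W" for u
  proof (cases "u = 0")
    case False
    have "f ((1 / norm u) *\<^sub>R u) \<le> f v0" by (rule v0_max[OF normalize[OF that False]])
    moreover have "f ((1 / norm u) *\<^sub>R u) = f u / (norm u)\<^sup>2"
      by (simp add: f_def matrix_vector_mult_scaleR cinner_scaleR_left cinner_scaleR_right
          power2_eq_square)
    ultimately show ?thesis using False by (simp add: field_simps)
  qed (simp add: f_def)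
  ultimately show ?thesis using that by (auto simp: K_def f_def)
qed

lemma hermitian_eigenvector_orthogonal_exists:
  fixes A :: "'n::finite cmat" and S :: "(complex^'n) set"
  assumes herm: "hermitian A" and fin: "finite S" and card: "card S < CARD('n)"
    and eig: "\<And>s. s \<in> S \<Longrightarrow> \<exists>c. A *v s = c *s s"
  shows "\<exists>v \<mu>. norm v = 1 \<and> (\<forall>s\<in>S. cinner s v = 0) \<and> A *v v = of_real \<mu> *s v"
proof -
  define W where "W = {v. \<forall>s\<in>S. cinner s v = 0}"
  have W: "subspace W"
    by (auto simp: subspace_def W_def cinner_add_right cinner_scaleR_right)
  have inv: "A *v v \<in> W" if "v \<in> W" for v
  proof -
    have "cinner s (A *v v) = 0" if "s \<in> S" for s
    proof -
      obtain c where "A *v s = c *s s" using eig \<open>s \<in> S\<close> by blast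
      thus ?thesis using \<open>v \<in> W\<close> \<open>s \<in> S\<close>
        by (simp add: hermitian_cinner[OF herm] cinner_cscale_left W_def)
    qed
    thus ?thesis by (simp add: W_def)
  qed
  have "W = (\<Inter>s\<in>S. {v. cinner s v = 0})" by (auto simp: W_def)
  hence "closed W"
    by (auto intro!: closed_Collect_eq linear_continuous_on bounded_linear_cinner_right)
  moreover obtain x where "x \<noteq> 0" "\<And>s. s \<in> S \<Longrightarrow> cinner s x = 0"
    using cinner_orthogonal_exists[OF fin card] by metis
  ultimately obtain v0 where v0: "v0 \<in> W" "norm v0 = 1"
    and max: "\<And>u. u \<in> W \<Longrightarrow> Re (cinner u (A *v u)) \<le> Re (cinner v0 (A *v v0)) * (norm u)\<^sup>2"
    using rayleigh_maximizer_exists[OF W, of x A] by (auto simp: W_def)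
  from hermitian_rayleigh_maximizer_eigenvector[OF herm W inv v0 max] v0
  show ?thesis by (auto simp: W_def)
qed

lemma hermitian_orthonormal_eigenvectors:
  fixes A :: "'n::finite cmat"
  assumes herm: "hermitian A" and "k \<le> CARD('n)"
  shows "\<exists>f lam. (\<forall>i<k. norm (f i) = 1 \<and> A *v f i = of_real (lam i) *s f i) \<and>
           (\<forall>i<k. \<forall>j<k. i \<noteq> j \<longrightarrow> cinner (f i) (f j) = 0)"
  using \<open>k \<le> CARD('n)\<close>
proof (induction k)
  case (Suc k)
  then obtain f lam where f1: "\<forall>i<k. norm (f i) = 1 \<and> A *v f i = of_real (lam i) *s f i"
    and f2: "\<forall>i<k. \<forall>j<k. i \<noteq> j \<longrightarrow> cinner (f i) (f j) = 0" by auto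
  have "card (f ` {..<k}) < CARD('n)"
    using Suc.prems card_image_le[of "{..<k}" f] by simp
  moreover have "\<And>s. s \<in> f ` {..<k} \<Longrightarrow> \<exists>c. A *v s = c *s s" using f1 by blast
  ultimately obtain v \<mu> where v: "norm v = 1" "\<forall>s\<in>f ` {..<k}. cinner s v = 0"
    "A *v v = of_real \<mu> *s v"
    using hermitian_eigenvector_orthogonal_exists[OF herm, of "f ` {..<k}"] by blast
  have "\<forall>i<Suc k. norm ((f(k := v)) i) = 1 \<and> A *v (f(k := v)) i = of_real ((lam(k := \<mu>)) i) *s (f(k := v)) i"
    using f1 v by (auto simp: less_Suc_eq)
  moreover have "\<forall>i<Suc k. \<forall>j<Suc k. i \<noteq> j \<longrightarrow> cinner ((f(k := v)) i) ((f(k := v)) j) = 0"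
    using f2 v(2) by (auto simp: less_Suc_eq cinner_commute[of v])
  ultimately show ?case by blast
qed simp

theorem hermitian_unitarily_diagonalizable:
  fixes A :: "'n::finite cmat"
  assumes herm: "hermitian A"
  obtains W lam where "unitary W" "A = W ** diagm (\<lambda>i. of_real (lam i)) ** mat_adj W"
proof -
  obtain f lam where f1: "\<forall>i<CARD('n). norm (f i) = 1 \<and> A *v f i = of_real (lam i) *s f i"
    and f2: "\<forall>i<CARD('n). \<forall>j<CARD('n). i \<noteq> j \<longrightarrow> cinner (f i) (f j) = 0"
    using hermitian_orthonormal_eigenvectors[OF herm order.refl] by auto
  obtain h :: "'n \<Rightarrow> nat" where h: "bij_betw h UNIV {0..<CARD('n)}"
    using ex_bij_betw_finite_nat[of "UNIV :: 'n set"] by auto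
  have hlt: "h i < CARD('n)" for i using h by (auto simp: bij_betw_def)
  have hinj: "h i = h j \<Longrightarrow> i = j" for i j using h by (auto simp: bij_betw_def inj_on_def)
  define W :: "'n cmat" where "W = (\<chi> a b. f (h b) $ a)"
  have "(mat_adj W ** W) $ b $ c = cinner (f (h b)) (f (h c))" for b c
    by (simp add: matrix_matrix_mult_def W_def cinner_def)
  also have "cinner (f (h b)) (f (h c)) = (if b = c then 1 else 0)" for b c
  proof (cases "b = c")
    case False thus ?thesis using f2 hlt hinj by metis
  qed (use f1 hlt in \<open>simp add: cinner_self\<close>)
  finally have "mat_adj W ** W = mat 1" by (simp add: vec_eq_iff mat_def)
  hence u: "unitary W" by (simp add: unitary_def matrix_left_right_inverse)
  have "(A ** W) $ a $ c = (A *v f (h c)) $ a" for a c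
    by (simp add: matrix_matrix_mult_def matrix_vector_mult_def W_def)
  hence "A ** W = W ** diagm (\<lambda>i. of_real (lam (h i)))"
    using f1 hlt by (simp add: vec_eq_iff diagm_mult_right W_def mult.commute)
  hence "A = W ** diagm (\<lambda>i. of_real (lam (h i))) ** mat_adj W"
    using u by (metis matrix_mul_assoc matrix_mul_rid unitary_def)
  with u show ?thesis by (rule that)
qed

lemma norm_axis_one: "norm (axis j (1::complex) :: complex^'n::finite) = 1"
  by (simp add: norm_eq_1 inner_axis')

lemma eigvals_unitary_diag:
  fixes A W :: "'n::finite cmat"
  assumes u: "unitary W" and A: "A = W ** diagm (\<lambda>i. of_real (lam i)) ** mat_adj W"
  shows "eigvals A = range (\<lambda>i. of_real (lam i))"
proof
  have WW: "mat_adj W ** W = mat 1" using u by (simp add: unitary_def)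
  show "range (\<lambda>i. complex_of_real (lam i)) \<subseteq> eigvals A"
  proof clarify
    fix j
    define v where "v = W *v axis j 1"
    have "norm v = 1" using unitary_norm_preserving[OF u] by (simp add: v_def norm_axis_one)
    moreover have "A *v v = of_real (lam j) *s v"
    proof -
      have "A *v v = W *v (diagm (\<lambda>i. of_real (lam i)) *v ((mat_adj W ** W) *v axis j 1))"
        by (simp add: A v_def matrix_vector_mul_assoc matrix_mul_assoc)
      also have "diagm (\<lambda>i. of_real (lam i)) *v ((mat_adj W ** W) *v axis j 1) = of_real (lam j) *s axis j 1"
        by (simp add: WW diagm_matrix_vector_mult vec_eq_iff axis_def)
      finally show ?thesis by (simp add: v_def matrix_vector_mult_cscale_vec)
    qed
    ultimately show "of_real (lam j) \<in> eigvals A"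
      unfolding eigvals_def by (intro CollectI exI[of _ v]) auto
  qed
  show "eigvals A \<subseteq> range (\<lambda>i. complex_of_real (lam i))"
  proof
    fix c assume "c \<in> eigvals A"
    then obtain v where "v \<noteq> 0" and v: "A *v v = c *s v" by (auto simp: eigvals_def)
    define y where "y = mat_adj W *v v"
    have "y \<noteq> 0"
      using unitary_norm_preserving[OF unitary_adj[OF u]] \<open>v \<noteq> 0\<close> by (metis norm_eq_zero y_def)
    then obtain j where yj: "y $ j \<noteq> 0" by (auto simp: vec_eq_iff)
    have "diagm (\<lambda>i. of_real (lam i)) *v y = mat_adj W *v (A *v v)"
      by (simp add: A y_def WW matrix_vector_mul_assoc matrix_mul_assoc)
    also have "\<dots> = c *s y" by (simp add: v y_def matrix_vector_mult_cscale_vec)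
    finally have "of_real (lam j) * y $ j = c * y $ j"
      by (simp add: diagm_matrix_vector_mult vec_eq_iff)
    thus "c \<in> range (\<lambda>i. complex_of_real (lam i))" using yj by auto
  qed
qed

lemma omega_max_unitary_diag:
  fixes A W :: "'n::finite cmat"
  assumes "unitary W" and "A = W ** diagm (\<lambda>i. of_real (lam i)) ** mat_adj W"
  shows "omega_max A = Max (range lam) - Min (range lam)"
  using eigvals_unitary_diag[OF assms] by (simp add: omega_max_def image_image)

lemma omega_max_nonneg: "hermitian H \<Longrightarrow> 0 \<le> omega_max H"
  by (elim hermitian_unitarily_diagonalizable) (simp add: omega_max_unitary_diag Max_ge_iff Min_le_iff)

section \<open>Commutators and traces\<close>

text \<open>Subtracting the midpoint \<open>c\<close> of the spectrum does not change the commutator, and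
  \<open>\<parallel>H - c\<parallel> = \<omega>(H)/2\<close>.\<close>

lemma op_norm_commutator_le:
  fixes H X :: "'n::finite cmat"
  assumes "hermitian H"
  shows "op_norm (H ** X - X ** H) \<le> omega_max H * op_norm X"
proof -
  obtain W lam where u: "unitary W" and H: "H = W ** diagm (\<lambda>i. of_real (lam i)) ** mat_adj W"
    using hermitian_unitarily_diagonalizable[OF assms] by blast
  define hi lo where "hi = Max (range lam)" and "lo = Min (range lam)"
  define c where "c = (hi + lo) / 2"
  define H' where "H' = W ** diagm (\<lambda>i. of_real (lam i - c)) ** mat_adj W"
  have "H = H' + c *\<^sub>R (W ** mat_adj W)"
  proof -
    have "diagm (\<lambda>i. of_real (lam i)) = diagm (\<lambda>i. of_real (lam i - c)) + c *\<^sub>R mat 1"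
      by (simp add: vec_eq_iff mat_def)
    thus ?thesis by (simp add: H H'_def matrix_mult_distribs)
  qed
  hence "H = H' + c *\<^sub>R mat 1" using u by (simp add: unitary_def)
  hence "H ** X - X ** H = H' ** X - X ** H'" by (simp add: matrix_mult_distribs)
  also have "op_norm \<dots> \<le> op_norm H' * op_norm X + op_norm X * op_norm H'"
    by (rule order_trans[OF op_norm_diff add_mono[OF op_norm_mult op_norm_mult]])
  also have "op_norm H' \<le> omega_max H / 2"
  proof -
    have "op_norm H' \<le> op_norm (diagm (\<lambda>i. complex_of_real (lam i - c)))"
      using op_norm_unitary_conj[OF unitary_adj[OF u]] by (simp add: H'_def)
    also have "\<dots> \<le> omega_max H / 2"
    proof (rule op_norm_diagm_le)
      fix i
      have "lo \<le> lam i" "lam i \<le> hi" by (simp_all add: hi_def lo_def)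
      hence "\<bar>lam i - c\<bar> \<le> (hi - lo) / 2" unfolding c_def by (auto simp: abs_le_iff field_simps)
      thus "norm (complex_of_real (lam i - c)) \<le> omega_max H / 2"
        unfolding norm_of_real omega_max_unitary_diag[OF u H] hi_def lo_def .
    qed
    finally show ?thesis .
  qed
  hence "op_norm H' * op_norm X + op_norm X * op_norm H' \<le> omega_max H * op_norm X"
    using mult_right_mono[OF _ op_norm_nonneg, of "op_norm H'" "omega_max H / 2" X]
    by (simp add: mult.commute)
  finally show ?thesis .
qed

lemma diag_entry_conj: "(mat_adj W ** Y ** W) $ j $ j = cinner (W *v axis j 1) (Y *v (W *v axis j 1))"
  for W Y :: "'n::finite cmat"
proof -
  have "M $ j $ j = cinner (axis j 1) (M *v axis j 1)" for M :: "'n cmat"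
    by (simp add: cinner_def matrix_vector_mult_def axis_def if_distrib if_distribR sum.delta
        cong: if_cong)
  hence "(mat_adj W ** Y ** W) $ j $ j = cinner (axis j 1) (mat_adj W *v (Y *v (W *v axis j 1)))"
    by (simp add: matrix_vector_mul_assoc matrix_mul_assoc)
  thus ?thesis using cinner_adj[of "axis j 1" "mat_adj W"] by simp
qed

lemma trace_unitary_diag_mult:
  fixes \<rho> W Y :: "'n::finite cmat"
  assumes "\<rho> = W ** diagm (\<lambda>i. of_real (lam i)) ** mat_adj W"
  shows "trace (\<rho> ** Y) = (\<Sum>j\<in>UNIV. of_real (lam j) * cinner (W *v axis j 1) (Y *v (W *v axis j 1)))"
proof -
  have "trace (\<rho> ** Y) = trace (W ** (diagm (\<lambda>i. of_real (lam i)) ** mat_adj W ** Y))"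
    by (simp add: assms matrix_mul_assoc)
  also have "\<dots> = trace (diagm (\<lambda>i. of_real (lam i)) ** (mat_adj W ** Y ** W))"
    by (subst trace_mul_sym) (simp add: matrix_mul_assoc)
  finally show ?thesis by (simp add: trace_def diagm_mult_left diag_entry_conj)
qed

lemma norm_trace_density_mult_le:
  fixes \<rho> Y :: "'n::finite cmat"
  assumes d: "density_operator \<rho>"
  shows "norm (trace (\<rho> ** Y)) \<le> op_norm Y"
proof -
  obtain W lam where u: "unitary W" and R: "\<rho> = W ** diagm (\<lambda>i. of_real (lam i)) ** mat_adj W"
    using hermitian_unitarily_diagonalizable d by (auto simp: density_operator_def)
  define v where "v j = W *v axis j 1" for j
  have norm_v: "norm (v j) = 1" for j
    using unitary_norm_preserving[OF u] by (simp add: v_def norm_axis_one)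
  have "mat_adj W ** \<rho> ** W = (mat_adj W ** W) ** diagm (\<lambda>i. of_real (lam i)) ** (mat_adj W ** W)"
    by (simp add: R matrix_mul_assoc)
  hence "of_real (lam j) = (mat_adj W ** \<rho> ** W) $ j $ j" for j
    using u by (simp add: unitary_def)
  hence "of_real (lam j) = cinner (v j) (\<rho> *v v j)" for j
    by (simp add: diag_entry_conj v_def)
  hence lam_nonneg: "0 \<le> lam j" for j
    using d by (simp add: density_operator_def) (metis Re_complex_of_real)
  have "of_real (\<Sum>j\<in>UNIV. lam j) = (\<Sum>j\<in>UNIV. of_real (lam j) * cinner (v j) (v j))"
    by (simp add: cinner_self norm_v)
  also have "\<dots> = trace \<rho>"
    using trace_unitary_diag_mult[OF R, of "mat 1"] by (simp add: v_def)
  also have "\<dots> = 1" using d by (simp add: density_operator_def)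
  finally have lam_sum: "(\<Sum>j\<in>UNIV. lam j) = 1" by (simp only: of_real_eq_1_iff)
  have "norm (trace (\<rho> ** Y)) \<le> (\<Sum>j\<in>UNIV. norm (of_real (lam j) * cinner (v j) (Y *v v j)))"
    unfolding trace_unitary_diag_mult[OF R] v_def by (rule norm_sum)
  also have "\<dots> \<le> (\<Sum>j\<in>UNIV. lam j * op_norm Y)"
  proof (rule sum_mono)
    fix j
    have "norm (cinner (v j) (Y *v v j)) \<le> op_norm Y"
      using norm_cinner_le[of "v j" "Y *v v j"] op_norm_mult_vec[of Y "v j"] by (simp add: norm_v)
    thus "norm (of_real (lam j) * cinner (v j) (Y *v v j)) \<le> lam j * op_norm Y"
      by (simp add: norm_mult lam_nonneg mult_left_mono)
  qed
  also have "\<dots> = op_norm Y" by (simp add: lam_sum flip: sum_distrib_right)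
  finally show ?thesis .
qed

section \<open>The evolution \<open>exp(-itH)\<close>\<close>

lemma diagm_sum: "diagm (\<lambda>j. \<Sum>k\<in>S. g k j) = (\<Sum>k\<in>S. diagm (g k))"
  by (induct S rule: infinite_finite_induct) (simp_all add: vec_eq_iff)

lemma diagm_sums:
  assumes "\<And>j. (\<lambda>k. g k j) sums s j"
  shows "(\<lambda>k. diagm (g k)) sums diagm s"
proof -
  have "(\<lambda>n. diagm (\<lambda>j. \<Sum>k<n. g k j)) \<longlonglongrightarrow> diagm s"
    unfolding diagm_def using assms by (intro tendsto_vec_lambda) (simp add: sums_def)
  thus ?thesis by (simp add: sums_def diagm_sum)
qed

lemma matpow_unitary_diag:
  assumes u: "unitary W" and H: "H = W ** diagm (\<lambda>i. of_real (lam i)) ** mat_adj W"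
  shows "matpow (cscale_mat c H) k = W ** diagm (\<lambda>i. (c * of_real (lam i)) ^ k) ** mat_adj W"
proof (induction k)
  case 0
  show ?case using u by (simp add: diagm_one unitary_def)
next
  case (Suc k)
  have WW: "mat_adj W ** W = mat 1" using u by (simp add: unitary_def)
  have "matpow (cscale_mat c H) (Suc k)
      = cscale_mat c H ** (W ** diagm (\<lambda>i. (c * of_real (lam i)) ^ k) ** mat_adj W)"
    by (simp add: Suc.IH)
  also have "\<dots> = cscale_mat c (W ** diagm (\<lambda>i. of_real (lam i)) ** (mat_adj W ** W)
          ** diagm (\<lambda>i. (c * of_real (lam i)) ^ k) ** mat_adj W)"
    by (simp add: H cscale_mult_left matrix_mul_assoc)
  also have "\<dots> = W ** cscale_mat c (diagm (\<lambda>i. of_real (lam i)) ** diagm (\<lambda>i. (c * of_real (lam i)) ^ k))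
      ** mat_adj W"
    by (simp add: WW matrix_mul_assoc cscale_mult_left cscale_mult_right)
  also have "cscale_mat c (diagm (\<lambda>i. of_real (lam i)) ** diagm (\<lambda>i. (c * of_real (lam i)) ^ k))
      = diagm (\<lambda>i. (c * of_real (lam i)) ^ Suc k)"
    by (simp add: diagm_mult vec_eq_iff algebra_simps)
  finally show ?case .
qed

lemma mexp_unitary_diag:
  assumes u: "unitary W" and H: "H = W ** diagm (\<lambda>i. of_real (lam i)) ** mat_adj W"
  shows "mexp (cscale_mat c H) = W ** diagm (\<lambda>i. exp (c * of_real (lam i))) ** mat_adj W"
proof -
  have "(1 / fact k) *\<^sub>R matpow (cscale_mat c H) k
      = W ** diagm (\<lambda>i. (c * of_real (lam i)) ^ k /\<^sub>R fact k) ** mat_adj W" for k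
  proof -
    have "(1 / fact k) *\<^sub>R matpow (cscale_mat c H) k
        = W ** ((1 / fact k) *\<^sub>R diagm (\<lambda>i. (c * of_real (lam i)) ^ k)) ** mat_adj W"
      by (simp add: matpow_unitary_diag[OF u H] matrix_scaleR_left matrix_scaleR_right)
    also have "(1 / fact k) *\<^sub>R diagm (\<lambda>i. (c * of_real (lam i)) ^ k)
        = diagm (\<lambda>i. (c * of_real (lam i)) ^ k /\<^sub>R fact k)"
      by (simp add: vec_eq_iff divide_inverse mult.commute)
    finally show ?thesis .
  qed
  moreover have "(\<lambda>k. W ** diagm (\<lambda>i. (c * of_real (lam i)) ^ k /\<^sub>R fact k) ** mat_adj W) sums
      (W ** diagm (\<lambda>i. exp (c * of_real (lam i))) ** mat_adj W)"
    by (rule bounded_linear.sums[OF bounded_linear_conj_mult diagm_sums[OF exp_converges]])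
  ultimately show ?thesis unfolding mexp_def by (simp add: sums_iff)
qed

definition evol :: "'n::finite cmat \<Rightarrow> real \<Rightarrow> 'n cmat" where
  "evol H t = mexp (cscale_mat (- \<i> * complex_of_real t) H)"

definition phase_diag :: "('n::finite \<Rightarrow> real) \<Rightarrow> real \<Rightarrow> 'n cmat" where
  "phase_diag lam t = diagm (\<lambda>i. exp (- \<i> * of_real t * of_real (lam i)))"

lemma evol_unitary_diag:
  assumes "unitary W" and "H = W ** diagm (\<lambda>i. of_real (lam i)) ** mat_adj W"
  shows "evol H t = W ** phase_diag lam t ** mat_adj W"
  unfolding evol_def phase_diag_def by (simp add: mexp_unitary_diag[OF assms])

lemma phase_diag_unitary: "unitary (phase_diag lam t)"
proof -
  have "cnj (exp z) * exp z = 1" if "Re z = 0" for z :: complex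
  proof -
    have "cnj z + z = 0" using that by (simp add: complex_eq_iff)
    thus ?thesis by (simp add: exp_cnj flip: exp_add)
  qed
  hence "mat_adj (phase_diag lam t) ** phase_diag lam t = mat 1"
    by (simp add: phase_diag_def diagm_adj diagm_mult diagm_one)
  thus ?thesis by (simp add: unitary_def matrix_left_right_inverse)
qed

lemma phase_diag_has_vector_derivative:
  fixes lam :: "'n::finite \<Rightarrow> real"
  shows "(phase_diag lam has_vector_derivative
     diagm (\<lambda>i. - \<i> * of_real (lam i) * exp (- \<i> * of_real t * of_real (lam i)))) (at t)"
proof -
  define E where "E j = diagm (\<lambda>k. if k = j then 1 else 0)" for j :: 'n
  have basis: "diagm d = (\<Sum>j\<in>UNIV. cscale_mat (d j) (E j))" for d
  proof -
    have "diagm d = diagm (\<lambda>k. \<Sum>j\<in>UNIV. d j * (if k = j then 1 else 0))"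
      by (simp add: if_distrib cong: if_cong)
    also have "\<dots> = (\<Sum>j\<in>UNIV. diagm (\<lambda>k. d j * (if k = j then 1 else 0)))"
      by (rule diagm_sum)
    also have "\<dots> = (\<Sum>j\<in>UNIV. cscale_mat (d j) (E j))"
      by (intro sum.cong refl) (simp add: vec_eq_iff E_def)
    finally show ?thesis .
  qed
  have lin: "bounded_linear (\<lambda>z. cscale_mat z (E j))" for j
    by (rule linear_conv_bounded_linear[THEN iffD1], rule linearI) (simp_all add: vec_eq_iff algebra_simps)
  have entry: "((\<lambda>s. exp (- \<i> * of_real s * of_real (lam j))) has_vector_derivative
      (- \<i> * of_real (lam j) * exp (- \<i> * of_real t * of_real (lam j)))) (at t)" for j
  proof -
    have "((\<lambda>z. exp (z * (- \<i> * of_real (lam j)))) has_field_derivative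
        exp (of_real t * (- \<i> * of_real (lam j))) * (- \<i> * of_real (lam j))) (at (of_real t))"
      by (auto intro!: derivative_eq_intros)
    from has_vector_derivative_real_field[OF this] show ?thesis by (simp add: algebra_simps)
  qed
  have "((\<lambda>s. \<Sum>j\<in>UNIV. cscale_mat (exp (- \<i> * of_real s * of_real (lam j))) (E j))
      has_vector_derivative (\<Sum>j\<in>UNIV. cscale_mat
        (- \<i> * of_real (lam j) * exp (- \<i> * of_real t * of_real (lam j))) (E j))) (at t)"
    by (intro has_vector_derivative_sum bounded_linear.has_vector_derivative[OF lin entry])
  thus ?thesis unfolding phase_diag_def by (simp only: basis[symmetric])
qed

lemma evol_unitary: "hermitian H \<Longrightarrow> unitary (evol H t)"
  by (elim hermitian_unitarily_diagonalizable)
     (simp add: evol_unitary_diag unitary_mult unitary_adj phase_diag_unitary)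

lemma evol_has_vector_derivative:
  assumes "hermitian H"
  shows "(evol H has_vector_derivative cscale_mat (- \<i>) (H ** evol H t)) (at t)"
proof -
  obtain W lam where u: "unitary W" and H: "H = W ** diagm (\<lambda>i. of_real (lam i)) ** mat_adj W"
    using hermitian_unitarily_diagonalizable assms by blast
  have WW: "mat_adj W ** W = mat 1" using u by (simp add: unitary_def)
  have "evol H = (\<lambda>s. W ** phase_diag lam s ** mat_adj W)"
    using evol_unitary_diag[OF u H] by auto
  moreover have "cscale_mat (- \<i>) (H ** evol H t)
      = W ** diagm (\<lambda>i. - \<i> * of_real (lam i) * exp (- \<i> * of_real t * of_real (lam i))) ** mat_adj W"
  proof -
    have "H ** evol H t
        = W ** diagm (\<lambda>i. of_real (lam i)) ** (mat_adj W ** W) ** phase_diag lam t ** mat_adj W"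
      unfolding evol_unitary_diag[OF u H] by (subst (1) H) (simp add: matrix_mul_assoc)
    hence "H ** evol H t = W ** (diagm (\<lambda>i. of_real (lam i)) ** phase_diag lam t) ** mat_adj W"
      by (simp add: WW matrix_mul_assoc)
    hence "cscale_mat (- \<i>) (H ** evol H t)
        = W ** cscale_mat (- \<i>) (diagm (\<lambda>i. of_real (lam i)) ** phase_diag lam t) ** mat_adj W"
      by (simp add: cscale_mult_left cscale_mult_right)
    also have "cscale_mat (- \<i>) (diagm (\<lambda>i. of_real (lam i)) ** phase_diag lam t)
        = diagm (\<lambda>i. - \<i> * of_real (lam i) * exp (- \<i> * of_real t * of_real (lam i)))"
      by (simp add: phase_diag_def diagm_mult vec_eq_iff)
    finally show ?thesis .
  qed
  ultimately show ?thesis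
    using bounded_linear.has_vector_derivative[OF bounded_linear_conj_mult
        phase_diag_has_vector_derivative]
    by simp
qed

section \<open>Derivatives of the channel\<close>

definition icomm :: "'n::finite cmat \<Rightarrow> 'n cmat \<Rightarrow> 'n cmat" where
  "icomm H X = cscale_mat \<i> (H ** X - X ** H)"

lemma bounded_linear_icomm: "bounded_linear (icomm H)"
  unfolding icomm_def
  by (rule linear_conv_bounded_linear[THEN iffD1], rule linearI)
     (simp_all add: matrix_mult_distribs vec_eq_iff algebra_simps)

lemma op_norm_icomm_le: "hermitian H \<Longrightarrow> op_norm (icomm H X) \<le> omega_max H * op_norm X"
  unfolding icomm_def using op_norm_cscale[of \<i> "H ** X - X ** H"] op_norm_commutator_le[of H X]
  by simp

lemma conj_evol_has_vector_derivative:
  assumes herm: "hermitian H" and Y: "(Y has_vector_derivative Y') (at t)"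
  shows "((\<lambda>s. mat_adj (evol H s) ** Y s ** evol H s) has_vector_derivative
          mat_adj (evol H t) ** (icomm H (Y t) + Y') ** evol H t) (at t)"
proof -
  define E' where "E' = cscale_mat (- \<i>) (H ** evol H t)"
  have dE: "(evol H has_vector_derivative E') (at t)"
    unfolding E'_def by (rule evol_has_vector_derivative[OF herm])
  have "((\<lambda>s. mat_adj (evol H s)) has_vector_derivative mat_adj E') (at t)"
    by (rule bounded_linear.has_vector_derivative[OF bounded_linear_mat_adj dE])
  from bounded_bilinear.has_vector_derivative[OF bounded_bilinear_matrix_mult this Y]
  have "((\<lambda>s. mat_adj (evol H s) ** Y s) has_vector_derivative
      mat_adj (evol H t) ** Y' + mat_adj E' ** Y t) (at t)"
    by simp
  from bounded_bilinear.has_vector_derivative[OF bounded_bilinear_matrix_mult this dE]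
  have "((\<lambda>s. mat_adj (evol H s) ** Y s ** evol H s) has_vector_derivative
      mat_adj (evol H t) ** Y t ** E' + (mat_adj (evol H t) ** Y' + mat_adj E' ** Y t) ** evol H t) (at t)"
    by simp
  moreover have "mat_adj (evol H t) ** Y t ** E' + (mat_adj (evol H t) ** Y' + mat_adj E' ** Y t) ** evol H t
      = mat_adj (evol H t) ** (icomm H (Y t) + Y') ** evol H t"
    by (simp add: herm[unfolded hermitian_def] E'_def icomm_def mat_adj_cscale mat_adj_mult cscale_mult_left
        cscale_mult_right matrix_mult_distribs matrix_mul_assoc vec_eq_iff algebra_simps)
  ultimately show ?thesis by simp
qed

text \<open>Unfolded, \<open>leibniz D m Z = \<Sum>\<^sub>l (m choose l) D\<^sup>m\<^sup>-\<^sup>l (Z l)\<close>: if \<open>Z l\<close> is the \<open>l\<close>-th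
  derivative of \<open>Z 0\<close>, then the \<open>m\<close>-th derivative of \<open>exp(itH) Z\<^sub>0(t) exp(-itH)\<close> is
  \<open>exp(itH) (leibniz (icomm H) m Z t) exp(-itH)\<close>.\<close>

fun leibniz :: "('n::finite cmat \<Rightarrow> 'n cmat) \<Rightarrow> nat \<Rightarrow> (nat \<Rightarrow> real \<Rightarrow> 'n cmat) \<Rightarrow> real \<Rightarrow> 'n cmat" where
  "leibniz D 0 Z t = Z 0 t"
| "leibniz D (Suc m) Z t = D (leibniz D m Z t) + leibniz D m (\<lambda>l. Z (Suc l)) t"

lemma leibniz_has_vector_derivative:
  assumes D: "bounded_linear D" and Z: "\<And>l s. (Z l has_vector_derivative Z (Suc l) s) (at s)"
  shows "(leibniz D m Z has_vector_derivative leibniz D m (\<lambda>l. Z (Suc l)) t) (at t)"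
  using Z
proof (induction m arbitrary: Z t)
  case 0
  have "leibniz D 0 Z = Z 0" by (rule ext) simp
  thus ?case using 0 by simp
next
  case (Suc m)
  have 1: "(leibniz D m Z has_vector_derivative leibniz D m (\<lambda>l. Z (Suc l)) t) (at t)"
    and 2: "(leibniz D m (\<lambda>l. Z (Suc l)) has_vector_derivative leibniz D m (\<lambda>l. Z (Suc (Suc l))) t) (at t)"
    by (rule Suc.IH, rule Suc.prems)+
  have "leibniz D (Suc m) Z = (\<lambda>s. D (leibniz D m Z s) + leibniz D m (\<lambda>l. Z (Suc l)) s)"
    by (rule ext) simp
  thus ?case
    using has_vector_derivative_add[OF bounded_linear.has_vector_derivative[OF D 1] 2] by simp
qed

lemma op_norm_leibniz_le:
  assumes D: "\<And>Y. op_norm (D Y) \<le> w * op_norm Y" and "0 \<le> w" "0 \<le> a"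
    and Z: "\<And>l. op_norm (Z l t) \<le> a ^ l * c"
  shows "op_norm (leibniz D m Z t) \<le> (w + a) ^ m * c"
  using Z
proof (induction m arbitrary: Z c)
  case 0
  show ?case using "0"[of 0] by simp
next
  case (Suc m)
  have IH: "op_norm (leibniz D m Z t) \<le> (w + a) ^ m * c" by (rule Suc.IH, rule Suc.prems)
  have shifted: "op_norm (leibniz D m (\<lambda>l. Z (Suc l)) t) \<le> (w + a) ^ m * (a * c)"
  proof (rule Suc.IH)
    show "op_norm (Z (Suc l) t) \<le> a ^ l * (a * c)" for l
      using Suc.prems[of "Suc l"] by (simp add: algebra_simps)
  qed
  have "op_norm (leibniz D (Suc m) Z t)
      \<le> op_norm (D (leibniz D m Z t)) + op_norm (leibniz D m (\<lambda>l. Z (Suc l)) t)"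
    by (simp add: op_norm_add)
  also have "\<dots> \<le> w * ((w + a) ^ m * c) + (w + a) ^ m * (a * c)"
    by (intro add_mono order_trans[OF D] mult_left_mono IH shifted \<open>0 \<le> w\<close>)
  also have "\<dots> = (w + a) ^ Suc m * c" by (simp add: algebra_simps)
  finally show ?case .
qed

lemma foldr_matrix_mult:
  "foldr (\<lambda>k A. G k ** A) xs (B::'n::finite cmat) = foldr (\<lambda>k A. G k ** A) xs (mat 1) ** B"
  by (induct xs) (simp_all add: matrix_mul_assoc)

lemma circ_unitary_Suc:
  "circ_unitary (Suc K) V H t = circ_unitary K V H t ** (V (Suc K) ** evol (H (Suc K)) t)"
proof -
  have "[1..<Suc K + 1] = [1..<K + 1] @ [Suc K]" by simp
  thus ?thesis unfolding circ_unitary_def evol_def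
    by (simp only: foldr_append) (simp add: foldr_matrix_mult[where B="V (Suc K) ** _"])
qed

lemma chan_Suc:
  "chan (Suc K) V H t X = mat_adj (evol (H (Suc K)) t) **
     (mat_adj (V (Suc K)) ** chan K V H t X ** V (Suc K)) ** evol (H (Suc K)) t"
  unfolding chan_def circ_unitary_Suc by (simp add: mat_adj_mult matrix_mul_assoc)

fun chan_deriv :: "(nat \<Rightarrow> 'n::finite cmat) \<Rightarrow> (nat \<Rightarrow> 'n cmat) \<Rightarrow> 'n cmat \<Rightarrow> nat \<Rightarrow> nat \<Rightarrow> real \<Rightarrow> 'n cmat" where
  "chan_deriv V H X 0 m t = (if m = 0 then X else 0)"
| "chan_deriv V H X (Suc j) m t = mat_adj (evol (H (Suc j)) t) **
     leibniz (icomm (H (Suc j))) m (\<lambda>l s. mat_adj (V (Suc j)) ** chan_deriv V H X j l s ** V (Suc j)) t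
     ** evol (H (Suc j)) t"

lemma chan_deriv_0: "chan_deriv V H X j 0 t = chan j V H t X"
proof (induction j)
  case 0 thus ?case by (simp add: chan_def circ_unitary_def)
qed (simp add: chan_Suc)

lemma chan_deriv_has_vector_derivative:
  "\<forall>k\<in>{1..j}. hermitian (H k) \<Longrightarrow>
     (chan_deriv V H X j m has_vector_derivative chan_deriv V H X j (Suc m) t) (at t)"
proof (induction j arbitrary: m t)
  case 0
  have "chan_deriv V H X 0 m = (\<lambda>s. if m = 0 then X else 0)" by (rule ext) simp
  thus ?case by simp
next
  case (Suc j)
  have herm: "hermitian (H (Suc j))" using Suc.prems by simp
  define Z where "Z = (\<lambda>l s. mat_adj (V (Suc j)) ** chan_deriv V H X j l s ** V (Suc j))"
  have dZ: "(Z l has_vector_derivative Z (Suc l) s) (at s)" for l s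
    unfolding Z_def using Suc
    by (intro bounded_linear.has_vector_derivative[OF bounded_linear_conj_mult]) auto
  from conj_evol_has_vector_derivative[OF herm
      leibniz_has_vector_derivative[where Z = Z, OF bounded_linear_icomm dZ]]
  show ?case by (simp add: Z_def)
qed

lemma op_norm_chan_deriv_le:
  "\<forall>k\<in>{1..j}. hermitian (H k) \<and> unitary (V k) \<Longrightarrow>
     op_norm (chan_deriv V H X j m t) \<le> (\<Sum>i=1..j. omega_max (H i)) ^ m * op_norm X"
proof (induction j arbitrary: m t)
  case 0 thus ?case by (cases m) (simp_all add: op_norm_nonneg)
next
  case (Suc j)
  have herm: "hermitian (H (Suc j))" and "unitary (V (Suc j))" using Suc.prems by auto
  define a where "a = (\<Sum>i=1..j. omega_max (H i))"
  have "0 \<le> a" unfolding a_def using Suc.prems by (intro sum_nonneg omega_max_nonneg) auto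
  define Z where "Z = (\<lambda>l s. mat_adj (V (Suc j)) ** chan_deriv V H X j l s ** V (Suc j))"
  have "op_norm (Z l t) \<le> a ^ l * op_norm X" for l
    unfolding Z_def a_def using Suc
    by (intro order_trans[OF op_norm_unitary_conj[OF \<open>unitary (V (Suc j))\<close>]]) auto
  hence "op_norm (leibniz (icomm (H (Suc j))) m Z t) \<le> (omega_max (H (Suc j)) + a) ^ m * op_norm X"
    by (intro op_norm_leibniz_le op_norm_icomm_le herm omega_max_nonneg \<open>0 \<le> a\<close>)
  hence "op_norm (chan_deriv V H X (Suc j) m t) \<le> (omega_max (H (Suc j)) + a) ^ m * op_norm X"
    by (simp add: Z_def order_trans[OF op_norm_unitary_conj[OF evol_unitary[OF herm]]])
  thus ?case by (simp add: a_def add.commute)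
qed

definition loss_deriv :: "'n::finite cmat \<Rightarrow> 'n cmat \<Rightarrow> nat \<Rightarrow> (nat \<Rightarrow> 'n cmat) \<Rightarrow> (nat \<Rightarrow> 'n cmat) \<Rightarrow> nat \<Rightarrow> real \<Rightarrow> real" where
  "loss_deriv \<rho> X K V H m t = Re (trace (\<rho> ** chan_deriv V H X K m t))"

lemma loss_eq_loss_deriv_0: "loss \<rho> X K V H = loss_deriv \<rho> X K V H 0"
  by (simp add: fun_eq_iff loss_def loss_deriv_def chan_deriv_0)

lemma loss_deriv_DERIV:
  assumes "\<forall>k\<in>{1..K}. hermitian (H k)"
  shows "DERIV (loss_deriv \<rho> X K V H m) t :> loss_deriv \<rho> X K V H (Suc m) t"
proof -
  have "trace (c *\<^sub>R A) = of_real c * trace A" for c and A :: "'a cmat"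
    by (simp add: trace_def sum_distrib_left)
  hence "bounded_linear (\<lambda>Y::'a cmat. Re (trace (\<rho> ** Y)))"
    by (intro linear_conv_bounded_linear[THEN iffD1] linearI)
       (simp_all add: matrix_add_ldistrib trace_add matrix_scaleR_right)
  from bounded_linear.has_vector_derivative[OF this chan_deriv_has_vector_derivative[OF assms]]
  show ?thesis unfolding loss_deriv_def has_real_derivative_iff_has_vector_derivative .
qed

lemma abs_loss_deriv_le:
  assumes "\<forall>k\<in>{1..K}. hermitian (H k) \<and> unitary (V k)" and "density_operator \<rho>"
  shows "\<bar>loss_deriv \<rho> X K V H m t\<bar> \<le> (\<Sum>i=1..K. omega_max (H i)) ^ m * op_norm X"
  unfolding loss_deriv_def
  using abs_Re_le_cmod norm_trace_density_mult_le[OF assms(2)] op_norm_chan_deriv_le[OF assms(1)]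
  by (blast intro: order_trans)

lemma chan2_eq_chan_deriv:
  assumes "\<forall>k\<in>{1..K}. hermitian (H k)"
  shows "chan2 K V H \<phi> X = chan_deriv V H X K 2 \<phi>"
proof -
  have "(\<lambda>t. vector_derivative (\<lambda>s. chan K V H s X) (at t)) = chan_deriv V H X K 1"
    by (auto simp flip: chan_deriv_0 intro!: vector_derivative_at chan_deriv_has_vector_derivative[OF assms])
  hence "chan2 K V H \<phi> X = vector_derivative (chan_deriv V H X K 1) (at \<phi>)"
    by (simp add: chan2_def)
  also have "\<dots> = chan_deriv V H X K 2 \<phi>"
    by (rule vector_derivative_at) (simp add: chan_deriv_has_vector_derivative[OF assms] numeral_2_eq_2)
  finally show ?thesis .
qed

section \<open>A lower bound for the variance over a small interval\<close>

lemma symmetric_taylor_remainder_le: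
  fixes d :: "nat \<Rightarrow> real \<Rightarrow> real"
  assumes der: "\<And>m x. DERIV (d m) x :> d (Suc m) x" and bd: "\<And>x. \<bar>d 4 x\<bar> \<le> D"
  shows "\<bar>d 0 (\<phi> + s) + d 0 (\<phi> - s) - 2 * d 0 \<phi> - d 2 \<phi> * s\<^sup>2\<bar> \<le> D * s ^ 4 / 12"
proof -
  define e where "e = (\<lambda>m x. d m (\<phi> + x))"
  have "DERIV (\<lambda>x. d m (\<phi> + x)) x :> d (Suc m) (\<phi> + x) * 1" for m x
    by (rule DERIV_chain2[where g = "\<lambda>x. \<phi> + x", OF der]) (auto intro!: derivative_eq_intros)
  hence de: "\<forall>m x. DERIV (e m) x :> e (Suc m) x" by (simp add: e_def)
  obtain t1 where t1: "d 0 (\<phi> + s) = (\<Sum>m<4. e m 0 / fact m * s ^ m) + e 4 t1 / fact 4 * s ^ 4"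
    using Maclaurin_all_le[OF refl de, of s 4] by (auto simp: e_def)
  obtain t2 where t2: "d 0 (\<phi> - s) = (\<Sum>m<4. e m 0 / fact m * (-s) ^ m) + e 4 t2 / fact 4 * (-s) ^ 4"
    using Maclaurin_all_le[OF refl de, of "-s" 4] by (auto simp: e_def)
  have "d 0 (\<phi> + s) + d 0 (\<phi> - s) - 2 * d 0 \<phi> - d 2 \<phi> * s\<^sup>2 = (e 4 t1 + e 4 t2) / 24 * s ^ 4"
    unfolding t1 t2 by (simp add: e_def eval_nat_numeral fact_numeral field_simps)
  also have "\<bar>\<dots>\<bar> \<le> (D + D) / 24 * s ^ 4"
  proof -
    have "\<bar>e 4 t1 + e 4 t2\<bar> \<le> D + D"
      unfolding e_def by (rule order_trans[OF abs_triangle_ineq add_mono[OF bd bd]])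
    from mult_right_mono[OF this, of "s ^ 4 / 24"] show ?thesis by (simp add: abs_mult)
  qed
  finally show ?thesis by simp
qed

lemma integral_uniform_measure_Icc:
  fixes g :: "real \<Rightarrow> real"
  assumes r: "0 < r" and g: "continuous_on UNIV g"
  shows "integral\<^sup>L (uniform_measure lborel {\<phi> - r .. \<phi> + r}) g = integral {-r..r} (\<lambda>s. g (\<phi> + s)) / (2 * r)"
proof -
  define S where "S = {\<phi> - r .. \<phi> + r}"
  have dens: "(\<lambda>x. indicator S x / emeasure lborel S) = (\<lambda>x. ennreal (indicator S x / (2 * r)))"
  proof
    fix x show "indicator S x / emeasure lborel S = ennreal (indicator S x / (2 * r))"
      using r by (cases "x \<in> S") (simp_all add: S_def divide_ennreal[symmetric])
  qed
  have "integral\<^sup>L (uniform_measure lborel S) g = integral\<^sup>L lborel (\<lambda>x. (indicator S x / (2 * r)) *\<^sub>R g x)"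
    unfolding uniform_measure_def dens using r
    by (intro integral_density) (auto simp: S_def borel_measurable_continuous_onI[OF g])
  also have "\<dots> = integral\<^sup>L lborel (\<lambda>x. indicator S x *\<^sub>R g x) / (2 * r)"
    by (simp flip: integral_divide_zero)
  also have "integral\<^sup>L lborel (\<lambda>x. indicator S x *\<^sub>R g x) = integral S g"
  proof -
    have si: "set_integrable lborel S g"
      unfolding set_integrable_def S_def
      by (rule borel_integrable_compact) (auto intro: continuous_on_subset[OF g])
    show ?thesis using set_borel_integral_eq_integral(2)[OF si] by (simp add: set_lebesgue_integral_def)
  qed
  also have "integral S g = integral {-r..r} (\<lambda>s. g (\<phi> + s))"
  proof -
    have "{-r + \<phi> .. r + \<phi>} = S" by (auto simp: S_def)
    moreover have "(g has_integral integral S g) S"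
      by (auto intro!: integrable_integral integrable_continuous_interval continuous_on_subset[OF g]
          simp: S_def)
    ultimately have "((g \<circ> (+) \<phi>) has_integral integral S g) {-r..r}"
      by (simp add: has_integral_shift_Icc_real)
    hence "integral {-r..r} (g \<circ> (+) \<phi>) = integral S g" by (rule integral_unique)
    thus ?thesis by (simp add: comp_def)
  qed
  finally show ?thesis by (simp add: S_def)
qed

lemma has_integral_even_power:
  assumes "0 \<le> r" and "even k"
  shows "((\<lambda>s. s ^ k) has_integral 2 * r ^ (k + 1) / (k + 1)) {-r..r::real}"
proof -
  have "((\<lambda>s. s ^ Suc k / Suc k) has_real_derivative s ^ k) (at s)" for s :: real
    by (intro derivative_eq_intros) auto
  hence "((\<lambda>s. s ^ k) has_integral (r ^ Suc k / Suc k - (- r) ^ Suc k / Suc k)) {-r..r}"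
    using assms(1)
    by (intro fundamental_theorem_of_calculus)
       (auto simp: has_real_derivative_iff_has_vector_derivative[symmetric] has_field_derivative_at_within)
  moreover have "r ^ Suc k / Suc k - (- r) ^ Suc k / Suc k = 2 * r ^ Suc k / Suc k"
    using assms(2) by (simp add: add_divide_distrib[symmetric])
  ultimately show ?thesis by (simp add: add.commute)
qed

lemma power2_add_ge_weighted:
  fixes q R \<epsilon> :: real
  assumes "0 < \<epsilon>"
  shows "(1 - \<epsilon>) * q\<^sup>2 - (1 / \<epsilon> - 1) * R\<^sup>2 \<le> (q + R)\<^sup>2"
proof -
  have "\<epsilon> * ((q + R)\<^sup>2 - ((1 - \<epsilon>) * q\<^sup>2 - (1 / \<epsilon> - 1) * R\<^sup>2)) = (\<epsilon> * q + R)\<^sup>2"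
    using assms by (simp add: power2_eq_square field_simps)
  hence "0 \<le> \<epsilon> * ((q + R)\<^sup>2 - ((1 - \<epsilon>) * q\<^sup>2 - (1 / \<epsilon> - 1) * R\<^sup>2))" by simp
  thus ?thesis using assms by (simp add: zero_le_mult_iff)
qed

lemma power2_midpoint_le:
  fixes x y c :: real
  shows "((x + y) / 2 - c)\<^sup>2 \<le> ((x - c)\<^sup>2 + (y - c)\<^sup>2) / 2"
proof -
  have "((x - c)\<^sup>2 + (y - c)\<^sup>2) / 2 - ((x + y) / 2 - c)\<^sup>2 = ((x - y) / 2)\<^sup>2"
    by (simp add: power2_eq_square field_simps)
  thus ?thesis by (metis diff_ge_0_iff_ge zero_le_power2)
qed

lemma has_integral_symmetrize:
  fixes h :: "real \<Rightarrow> real"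
  assumes "continuous_on {-r..r} h"
  shows "((\<lambda>s. (h s + h (- s)) / 2) has_integral integral {-r..r} h) {-r..r}"
proof -
  have h: "(h has_integral integral {-r..r} h) {-r..r}"
    using assms by (auto intro!: integrable_integral integrable_continuous_interval)
  hence "((\<lambda>s. h (- s)) has_integral integral {-r..r} h) {-r..r}"
    using has_integral_reflect_real[where f = h and a = "-r" and b = r] by simp
  from has_integral_mult_left[OF has_integral_add[OF h this], of "1/2"] show ?thesis by simp
qed

lemma has_integral_square_quadratic:
  fixes b \<gamma> r :: real
  assumes "0 \<le> r"
  shows "((\<lambda>s. (b * s\<^sup>2 + \<gamma>)\<^sup>2) has_integral 2 * r * (4 * b\<^sup>2 * r ^ 4 / 45 + (\<gamma> + b * r\<^sup>2 / 3)\<^sup>2)) {-r..r}"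
proof -
  have "((\<lambda>s. s ^ 4) has_integral 2 * r ^ 5 / 5) {-r..r}"
    and "((\<lambda>s. s ^ 2) has_integral 2 * r ^ 3 / 3) {-r..r}"
    using has_integral_even_power[OF assms, of 4] has_integral_even_power[OF assms, of 2] by simp_all
  moreover have "((\<lambda>s. \<gamma>\<^sup>2) has_integral \<gamma>\<^sup>2 * (2 * r)) {-r..r}"
    using has_integral_const_real[of "\<gamma>\<^sup>2" "-r" r] assms by (simp add: mult.commute)
  ultimately have "((\<lambda>s. b\<^sup>2 * s ^ 4 + 2 * b * \<gamma> * s ^ 2 + \<gamma>\<^sup>2) has_integral
      b\<^sup>2 * (2 * r ^ 5 / 5) + 2 * b * \<gamma> * (2 * r ^ 3 / 3) + \<gamma>\<^sup>2 * (2 * r)) {-r..r}"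
    by (intro has_integral_add has_integral_mult_right)
  thus ?thesis by (simp add: power2_eq_square eval_nat_numeral algebra_simps)
qed

text \<open>Pairing \<open>\<phi> + s\<close> with \<open>\<phi> - s\<close> cancels the odd Taylor terms:
  \<open>(L(\<phi>+s) + L(\<phi>-s))/2 = L(\<phi>) + L''(\<phi>) s\<^sup>2/2 + R\<close> with \<open>|R| \<le> D s\<^sup>4/24\<close>, and the
  weighted inequality for \<open>(q + R)\<^sup>2\<close> discards \<open>R\<close> at the cost of \<open>(1/\<epsilon> - 1) R\<^sup>2\<close>.\<close>

lemma symmetric_square_ge_taylor:
  fixes d :: "nat \<Rightarrow> real \<Rightarrow> real"
  assumes der: "\<And>m x. DERIV (d m) x :> d (Suc m) x" and bd: "\<And>x. \<bar>d 4 x\<bar> \<le> D"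
    and \<epsilon>: "0 < \<epsilon>" "\<epsilon> \<le> 1"
  shows "(1 - \<epsilon>) * (d 2 \<phi> / 2 * s\<^sup>2 + (d 0 \<phi> - c))\<^sup>2 - (1 / \<epsilon> - 1) * (D * s ^ 4 / 24)\<^sup>2
    \<le> ((d 0 (\<phi> + s) - c)\<^sup>2 + (d 0 (\<phi> - s) - c)\<^sup>2) / 2"
proof -
  define q where "q = d 2 \<phi> / 2 * s\<^sup>2 + (d 0 \<phi> - c)"
  define R where "R = (d 0 (\<phi> + s) + d 0 (\<phi> - s)) / 2 - c - q"
  have "R = (d 0 (\<phi> + s) + d 0 (\<phi> - s) - 2 * d 0 \<phi> - d 2 \<phi> * s\<^sup>2) / 2"
    by (simp add: R_def q_def field_simps)
  hence "\<bar>R\<bar> = \<bar>d 0 (\<phi> + s) + d 0 (\<phi> - s) - 2 * d 0 \<phi> - d 2 \<phi> * s\<^sup>2\<bar> / 2" by simp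
  hence "\<bar>R\<bar> \<le> D * s ^ 4 / 24"
    using divide_right_mono[OF symmetric_taylor_remainder_le[OF der bd, of \<phi> s], of 2] by simp
  hence "R\<^sup>2 \<le> (D * s ^ 4 / 24)\<^sup>2" by (metis abs_ge_zero order.trans power2_abs power_mono)
  hence "(1 / \<epsilon> - 1) * R\<^sup>2 \<le> (1 / \<epsilon> - 1) * (D * s ^ 4 / 24)\<^sup>2"
    using \<epsilon> by (intro mult_left_mono) simp_all
  hence "(1 - \<epsilon>) * q\<^sup>2 - (1 / \<epsilon> - 1) * (D * s ^ 4 / 24)\<^sup>2 \<le> (1 - \<epsilon>) * q\<^sup>2 - (1 / \<epsilon> - 1) * R\<^sup>2"
    by linarith
  also have "\<dots> \<le> ((d 0 (\<phi> + s) + d 0 (\<phi> - s)) / 2 - c)\<^sup>2"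
    using power2_add_ge_weighted[OF \<epsilon>(1), of q R] by (simp add: R_def)
  also have "\<dots> \<le> ((d 0 (\<phi> + s) - c)\<^sup>2 + (d 0 (\<phi> - s) - c)\<^sup>2) / 2"
    by (rule power2_midpoint_le)
  finally show ?thesis by (simp add: q_def)
qed

lemma unif_var_ge_taylor:
  fixes d :: "nat \<Rightarrow> real \<Rightarrow> real"
  assumes r: "0 < r"
    and der: "\<And>m x. DERIV (d m) x :> d (Suc m) x" and bd: "\<And>x. \<bar>d 4 x\<bar> \<le> D"
    and \<epsilon>: "0 < \<epsilon>" "\<epsilon> \<le> 1"
  shows "(1 - \<epsilon>) * (d 2 \<phi>)\<^sup>2 * r ^ 4 / 45 - (1 / \<epsilon> - 1) * D\<^sup>2 * r ^ 8 / 5184 \<le> unif_var \<phi> r (d 0)"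
proof -
  define c where "c = integral\<^sup>L (uniform_measure lborel {\<phi> - r .. \<phi> + r}) (d 0)"
  define h where "h s = (d 0 (\<phi> + s) - c)\<^sup>2" for s
  define b where "b = d 2 \<phi> / 2"
  define \<gamma> where "\<gamma> = d 0 \<phi> - c"
  define low where "low s = (1 - \<epsilon>) * (b * s\<^sup>2 + \<gamma>)\<^sup>2 - (1 / \<epsilon> - 1) * D\<^sup>2 / 576 * s ^ 8" for s
  have cont: "continuous_on UNIV (d 0)"
    by (intro continuous_at_imp_continuous_on ballI DERIV_isCont[OF der])
  have var: "unif_var \<phi> r (d 0) = integral {-r..r} h / (2 * r)"
    unfolding unif_var_def Let_def c_def[symmetric] h_def
    by (rule integral_uniform_measure_Icc[OF r]) (intro continuous_intros cont)
  have "continuous_on {-r..r} h"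
    unfolding h_def by (auto intro!: continuous_intros continuous_on_compose2[OF cont])
  note avg = has_integral_symmetrize[OF this]
  have "((\<lambda>s. s ^ 8) has_integral 2 * r ^ 9 / 9) {-r..r}"
    using has_integral_even_power[OF less_imp_le[OF r], of 8] by simp
  with has_integral_square_quadratic[OF less_imp_le[OF r], of b \<gamma>]
  have low_int: "(low has_integral (1 - \<epsilon>) * (2 * r * (4 * b\<^sup>2 * r ^ 4 / 45 + (\<gamma> + b * r\<^sup>2 / 3)\<^sup>2))
      - (1 / \<epsilon> - 1) * D\<^sup>2 / 576 * (2 * r ^ 9 / 9)) {-r..r}"
    unfolding low_def by (intro has_integral_diff has_integral_mult_right)
  have low_le: "low s \<le> (h s + h (- s)) / 2" for s
    using symmetric_square_ge_taylor[OF der bd \<epsilon>, of \<phi> s c]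
    by (simp add: low_def h_def b_def \<gamma>_def power_mult_distrib power2_eq_square eval_nat_numeral)
  have "(1 - \<epsilon>) * ((d 2 \<phi>)\<^sup>2 * r ^ 4 / 45 + (\<gamma> + b * r\<^sup>2 / 3)\<^sup>2) - (1 / \<epsilon> - 1) * D\<^sup>2 * r ^ 8 / 5184
      = ((1 - \<epsilon>) * (2 * r * (4 * b\<^sup>2 * r ^ 4 / 45 + (\<gamma> + b * r\<^sup>2 / 3)\<^sup>2))
          - (1 / \<epsilon> - 1) * D\<^sup>2 / 576 * (2 * r ^ 9 / 9)) / (2 * r)"
    using r by (simp add: b_def power2_eq_square field_simps eval_nat_numeral)
  also have "\<dots> \<le> unif_var \<phi> r (d 0)"
    unfolding var using r by (intro divide_right_mono has_integral_le[OF low_int avg low_le]) simp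
  finally have "(1 - \<epsilon>) * ((d 2 \<phi>)\<^sup>2 * r ^ 4 / 45 + (\<gamma> + b * r\<^sup>2 / 3)\<^sup>2)
      - (1 / \<epsilon> - 1) * D\<^sup>2 * r ^ 8 / 5184 \<le> unif_var \<phi> r (d 0)" .
  moreover have "(1 - \<epsilon>) * ((d 2 \<phi>)\<^sup>2 * r ^ 4 / 45)
      \<le> (1 - \<epsilon>) * ((d 2 \<phi>)\<^sup>2 * r ^ 4 / 45 + (\<gamma> + b * r\<^sup>2 / 3)\<^sup>2)"
    using \<epsilon> by (intro mult_left_mono) auto
  ultimately show ?thesis by simp
qed

text \<open>The choice \<open>\<epsilon> = \<Omega>\<^sup>2 r\<^sup>2\<close> makes both error terms of \<open>unif_var_ge_taylor\<close> of order
  \<open>\<Omega>\<^sup>6 N\<^sup>2 r\<^sup>6\<close>.\<close>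

lemma unif_var_lower_bound:
  fixes d :: "nat \<Rightarrow> real \<Rightarrow> real"
  assumes r: "0 < r" and der: "\<And>m x. DERIV (d m) x :> d (Suc m) x"
    and bd2: "\<bar>d 2 \<phi>\<bar> \<le> \<Omega>\<^sup>2 * N" and bd4: "\<And>x. \<bar>d 4 x\<bar> \<le> \<Omega> ^ 4 * N"
    and \<Omega>: "0 \<le> \<Omega>" and r\<Omega>: "r * \<Omega> \<le> 1"
  shows "r ^ 4 / 45 * (d 2 \<phi>)\<^sup>2 - (1 / 45 + 1 / 5184) * \<Omega> ^ 6 * N\<^sup>2 * r ^ 6 \<le> unif_var \<phi> r (d 0)"
proof (cases "\<Omega> = 0")
  case True
  with bd2 have "d 2 \<phi> = 0" by simp
  moreover have "(1 - 1) * (d 2 \<phi>)\<^sup>2 * r ^ 4 / 45 - (1 / 1 - 1) * (\<Omega> ^ 4 * N)\<^sup>2 * r ^ 8 / 5184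
      \<le> unif_var \<phi> r (d 0)"
    by (rule unif_var_ge_taylor[OF r der bd4]) simp_all
  ultimately show ?thesis using True by simp
next
  case False
  define \<epsilon> where "\<epsilon> = \<Omega>\<^sup>2 * r\<^sup>2"
  define P where "P = \<Omega> ^ 6 * N\<^sup>2 * r ^ 6"
  have "0 < \<epsilon>" using False r by (simp add: \<epsilon>_def)
  moreover have "\<epsilon> \<le> 1"
    using power_mono[OF r\<Omega>, of 2] r \<Omega> by (simp add: \<epsilon>_def power_mult_distrib mult.commute)
  ultimately have V: "(1 - \<epsilon>) * (d 2 \<phi>)\<^sup>2 * r ^ 4 / 45 - (1 / \<epsilon> - 1) * (\<Omega> ^ 4 * N)\<^sup>2 * r ^ 8 / 5184
      \<le> unif_var \<phi> r (d 0)"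
    by (rule unif_var_ge_taylor[OF r der bd4])
  have "\<epsilon> * (d 2 \<phi>)\<^sup>2 * r ^ 4 \<le> P"
  proof -
    have "(d 2 \<phi>)\<^sup>2 \<le> (\<Omega>\<^sup>2 * N)\<^sup>2"
      using bd2 by (metis abs_ge_zero order.trans power2_abs power_mono)
    moreover have "0 \<le> \<epsilon> * r ^ 4" using \<open>0 < \<epsilon>\<close> r by simp
    ultimately have "\<epsilon> * r ^ 4 * (d 2 \<phi>)\<^sup>2 \<le> \<epsilon> * r ^ 4 * (\<Omega>\<^sup>2 * N)\<^sup>2"
      by (rule mult_left_mono)
    thus ?thesis
      by (simp add: P_def \<epsilon>_def power2_eq_square eval_nat_numeral mult_ac)
  qed
  moreover have "1 / \<epsilon> * (\<Omega> ^ 4 * N)\<^sup>2 * r ^ 8 = P"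
    using False r by (simp add: P_def \<epsilon>_def power2_eq_square eval_nat_numeral field_simps)
  moreover have "0 \<le> (\<Omega> ^ 4 * N)\<^sup>2 * r ^ 8" by simp
  ultimately have "0 \<le> (P - \<epsilon> * (d 2 \<phi>)\<^sup>2 * r ^ 4) / 45 + (P - 1 / \<epsilon> * (\<Omega> ^ 4 * N)\<^sup>2 * r ^ 8) / 5184
      + (\<Omega> ^ 4 * N)\<^sup>2 * r ^ 8 / 5184"
    by simp
  moreover have "(1 - \<epsilon>) * (d 2 \<phi>)\<^sup>2 * r ^ 4 / 45 - (1 / \<epsilon> - 1) * (\<Omega> ^ 4 * N)\<^sup>2 * r ^ 8 / 5184
      - (r ^ 4 / 45 * (d 2 \<phi>)\<^sup>2 - (1 / 45 + 1 / 5184) * \<Omega> ^ 6 * N\<^sup>2 * r ^ 6)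
    = (P - \<epsilon> * (d 2 \<phi>)\<^sup>2 * r ^ 4) / 45 + (P - 1 / \<epsilon> * (\<Omega> ^ 4 * N)\<^sup>2 * r ^ 8) / 5184
      + (\<Omega> ^ 4 * N)\<^sup>2 * r ^ 8 / 5184"
    using \<open>0 < \<epsilon>\<close> by (simp add: P_def field_simps)
  ultimately show ?thesis using V by linarith
qed

theorem corollary4:
  fixes \<rho> Ob :: "complex^'n::finite^'n"
    and K :: nat
    and H V :: "nat \<Rightarrow> complex^'n^'n"
    and \<phi> r :: real
  assumes "density_operator \<rho>"
    and "hermitian Ob"
    and "\<forall>k\<in>{1..K}. hermitian (H k)"
    and "\<forall>k\<in>{1..K}. unitary (V k)"
    and "r > 0"
    and "r * (4 * (\<Sum>i=1..K. omega_max (H i))) \<le> 3"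
  shows "unif_var \<phi> r (loss \<rho> Ob K V H) \<ge>
           r ^ 4 / 45 * (Re (trace (\<rho> ** chan2 K V H \<phi> Ob)))\<^sup>2
           - 32 * (\<Sum>i=1..K. omega_max (H i)) ^ 6 * (op_norm Ob)\<^sup>2 / 135 * r ^ 6"
proof -
  define \<Omega> where "\<Omega> = (\<Sum>i=1..K. omega_max (H i))"
  define L where "L = loss_deriv \<rho> Ob K V H"
  have "0 \<le> \<Omega>" unfolding \<Omega>_def using assms(3) by (intro sum_nonneg omega_max_nonneg) auto
  have bound: "\<bar>L m x\<bar> \<le> \<Omega> ^ m * op_norm Ob" for m x
    unfolding L_def \<Omega>_def using assms(1,3,4) by (intro abs_loss_deriv_le) auto
  have "(1 / 45 + 1 / 5184) * \<Omega> ^ 6 * (op_norm Ob)\<^sup>2 * r ^ 6 \<le> 32 * \<Omega> ^ 6 * (op_norm Ob)\<^sup>2 / 135 * r ^ 6"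
    using \<open>0 \<le> \<Omega>\<close> zero_le_power2[of "op_norm Ob"] by (simp add: field_simps)
  hence "r ^ 4 / 45 * (Re (trace (\<rho> ** chan2 K V H \<phi> Ob)))\<^sup>2 - 32 * \<Omega> ^ 6 * (op_norm Ob)\<^sup>2 / 135 * r ^ 6
      \<le> r ^ 4 / 45 * (L 2 \<phi>)\<^sup>2 - (1 / 45 + 1 / 5184) * \<Omega> ^ 6 * (op_norm Ob)\<^sup>2 * r ^ 6"
    by (simp add: L_def loss_deriv_def chan2_eq_chan_deriv assms(3))
  also have "\<dots> \<le> unif_var \<phi> r (L 0)"
    using assms(5,6) bound[of 2] \<open>0 \<le> \<Omega>\<close>
    by (intro unif_var_lower_bound[where d = L] bound) (auto simp: L_def \<Omega>_def loss_deriv_DERIV assms(3))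
  also have "\<dots> = unif_var \<phi> r (loss \<rho> Ob K V H)" by (simp add: L_def loss_eq_loss_deriv_0)
  finally show ?thesis unfolding \<Omega>_def .
qed

end
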